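(* Let $c\in[0,1)$ and $b=\tfrac12-c$. For any $\varepsilon>0$ and any $C>1$ there exist $0<\delta'<C\delta'<\delta<\tfrac12$ such that $\dim_H\mathcal B(\delta,\delta')<\varepsilon$.
   Context: $\mathbb T=\mathbb R/\mathbb Z$, $Tx=2x\bmod1$, $d$ the usual distance, $B(b,r)$ the open ball. Given $\tfrac12>\delta>\delta'>0$, a positive integer $n$ is a $(\delta,\delta')$-good time of $x\in\mathbb T$ if $d(T^nx,b)<\delta'$ and $b\notin T^j(J)$ for each $0\le j<n$, where $J$ is the connected component of $T^{-n}(B(b,\delta))$ containing $x$. $\mathcal B(\delta,\delta')=\{x\in\mathbb T: b\in\omega(x)$ but $x$ has no $(\delta,\delta')$-good time$\}$, where $\omega(x)$ is the $\omega$-limit set of $x$ under $T$. *)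

theory Defs
  imports "HOL-Analysis.Analysis"
begin

text \<open>The circle T = R/Z is represented by real numbers (representatives; points of T
  are reals modulo 1). The usual distance on T is the distance to the nearest integer
  of the difference.\<close>

definition circ_dist :: "real \<Rightarrow> real \<Rightarrow> real" where
  "circ_dist x y = min (frac (x - y)) (1 - frac (x - y))"

definition dbl :: "real \<Rightarrow> real" where
  "dbl x = frac (2 * x)"

definition omega_limit :: "real \<Rightarrow> real set" where
  "omega_limit x = {z \<in> {0..<1}. \<forall>e>0. \<forall>N. \<exists>n\<ge>N. circ_dist ((dbl ^^ n) x) z < e}"

definition preimage_ball :: "real \<Rightarrow> real \<Rightarrow> nat \<Rightarrow> real set" where
  "preimage_ball b \<delta> n = {y. circ_dist ((dbl ^^ n) y) b < \<delta>}"

text \<open>(delta, delta')-good time. J is the connected component of the (lifted)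
  preimage containing x; b not in T^j(J) means no point of J is mapped by T^j to b mod 1.\<close>
definition good_time :: "real \<Rightarrow> real \<Rightarrow> real \<Rightarrow> real \<Rightarrow> nat \<Rightarrow> bool" where
  "good_time b \<delta> \<delta>' x n \<longleftrightarrow> n > 0 \<and> circ_dist ((dbl ^^ n) x) b < \<delta>' \<and>
     (\<forall>j<n. \<forall>y \<in> connected_component_set (preimage_ball b \<delta> n) x.
        circ_dist ((dbl ^^ j) y) b \<noteq> 0)"

definition bad_set :: "real \<Rightarrow> real \<Rightarrow> real \<Rightarrow> real set" where
  "bad_set b \<delta> \<delta>' = {x \<in> {0..<1}. frac b \<in> omega_limit x \<and> \<not> (\<exists>n. good_time b \<delta> \<delta>' x n)}"

definition hausdorff_pre :: "real \<Rightarrow> real \<Rightarrow> 'a::metric_space set \<Rightarrow> ennreal" where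
  "hausdorff_pre s d A = (INF U \<in> {U :: nat \<Rightarrow> 'a set. A \<subseteq> (\<Union>i. U i) \<and>
       (\<forall>i. bounded (U i) \<and> diameter (U i) \<le> d)}. (\<Sum>i. ennreal (diameter (U i) powr s)))"

definition hausdorff_measure :: "real \<Rightarrow> 'a::metric_space set \<Rightarrow> ennreal" where
  "hausdorff_measure s A = (SUP d \<in> {0<..}. hausdorff_pre s d A)"

definition hausdorff_dim :: "'a::metric_space set \<Rightarrow> ereal" where
  "hausdorff_dim A = Inf {ereal s | s. s > 0 \<and> hausdorff_measure s A = 0}"

end

(* If x lies in the bad set, then 2^n x comes d'-close to a lift b + k of b for infinitely
   many n, and none of these n is a good time: some j < n maps a point of the component of x
   onto b.  Then T^m b is d-close to b for m = n - j, and as long as such close returns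
   expand (d' + dist (T^m b) b <= 2^m d'), 2^j x is again d'-close to a lift b + i.
   Iterating, every such k is produced by a chain of close returns of b.  Choose d below all
   nonzero return distances dist (T^m b) b with m < M.  Either b returns exactly before time
   M; then every close return is exact and the chains produce at most two indices at each
   level.  Or every close return takes at least M steps, and the number of indices at level n
   is O(mu^n) for a mu as close to 1 as we like.  So the bad set is covered, for arbitrarily
   large n, by O(mu^n) intervals of length 2 d' / 2^n, and its s-dimensional Hausdorff
   measure vanishes once mu < 2^s. *)

theory Submission
  imports Defs
begin

section \<open>Hausdorff measure of limsup sets of balls\<close>

lemma diameter_ball_le:
  fixes z :: "'a::metric_space"
  assumes "0 \<le> r"
  shows "diameter (ball z r) \<le> 2 * r"
proof -
  have "dist x y \<le> 2 * r" if "x \<in> ball z r" "y \<in> ball z r" for x y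
    using that dist_triangle2[of x y z] by (simp add: dist_commute)
  then show ?thesis
    using assms unfolding diameter_def by (auto intro!: cSUP_least)
qed

lemma hausdorff_pre_le_sum_balls:
  fixes A :: "'a::metric_space set" and F :: "nat \<Rightarrow> 'a set" and \<rho> :: "nat \<Rightarrow> real"
  assumes s: "0 \<le> s" and fin: "\<And>n. finite (F n)"
    and \<rho>: "\<And>n. 0 \<le> \<rho> n" "\<And>n. 2 * \<rho> n \<le> d"
    and summable: "summable (\<lambda>n. card (F n) * (2 * \<rho> n) powr s)"
    and cover: "A \<subseteq> (\<Union>n. \<Union>z\<in>F n. ball z (\<rho> n))"
  shows "hausdorff_pre s d A \<le> ennreal (\<Sum>n. card (F n) * (2 * \<rho> n) powr s)"
proof -
  obtain g where g: "\<And>n. bij_betw (g n) {..<card (F n)} (F n)"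
    using ex_bij_betw_nat_finite[OF fin] by (metis atLeast0LessThan)
  define V where "V n t = (if t < card (F n) then ball (g n t) (\<rho> n) else {})" for n t
  define W where "W n t = (if t < card (F n) then ennreal ((2 * \<rho> n) powr s) else 0)" for n t
  define U where "U i = case_prod V (prod_decode i)" for i
  have "A \<subseteq> (\<Union>i. U i)"
  proof
    fix x assume "x \<in> A"
    then obtain n z where z: "z \<in> F n" "x \<in> ball z (\<rho> n)"
      using cover by blast
    then obtain t where t: "t < card (F n)" "g n t = z"
      using g[of n] by (metis bij_betw_imp_surj_on imageE lessThan_iff)
    have "x \<in> U (prod_encode (n, t))" using t z by (simp add: U_def V_def)
    then show "x \<in> (\<Union>i. U i)" by blast
  qed
  moreover have "bounded (U i) \<and> diameter (U i) \<le> d" for i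
  proof -
    obtain n t where i: "prod_decode i = (n, t)" by force
    have "diameter (ball (g n t) (\<rho> n)) \<le> d"
      using diameter_ball_le[OF \<rho>(1)] \<rho>(2) by (rule order_trans)
    moreover have "0 \<le> d" using \<rho>(1)[of 0] \<rho>(2)[of 0] by linarith
    ultimately show ?thesis by (simp add: U_def V_def i)
  qed
  ultimately have "hausdorff_pre s d A \<le> (\<Sum>i. ennreal (diameter (U i) powr s))"
    unfolding hausdorff_pre_def by (intro INF_lower) auto
  also have "\<dots> \<le> (\<Sum>i. case_prod W (prod_decode i))"
  proof (intro suminf_le summableI)
    fix i
    obtain n t where i: "prod_decode i = (n, t)" by force
    have "diameter (V n t) powr s \<le> (if t < card (F n) then (2 * \<rho> n) powr s else 0)"
      using diameter_ball_le[OF \<rho>(1)] s by (auto simp: V_def intro!: powr_mono2 diameter_ge_0)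
    then show "ennreal (diameter (U i) powr s) \<le> case_prod W (prod_decode i)"
      by (auto simp: U_def W_def i intro: ennreal_leI)
  qed
  also have "\<dots> = (\<Sum>n. ennreal (card (F n) * (2 * \<rho> n) powr s))"
  proof (rule suminf_ennreal_2dimen)
    fix n
    have "(\<Sum>t. W n t) = (\<Sum>t<card (F n). W n t)"
      by (rule suminf_finite) (simp, simp add: W_def)
    also have "\<dots> = ennreal (card (F n) * (2 * \<rho> n) powr s)"
      by (simp add: W_def ennreal_mult' ennreal_of_nat_eq_real_of_nat)
    finally show "ennreal (card (F n) * (2 * \<rho> n) powr s) = (\<Sum>t. case_prod W (n, t))" by simp
  qed
  also have "\<dots> = ennreal (\<Sum>n. card (F n) * (2 * \<rho> n) powr s)"
    using summable by (rule suminf_ennreal2[rotated]) simp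
  finally show ?thesis .
qed

lemma hausdorff_measure_limsup_balls_eq_0:
  fixes A :: "'a::metric_space set" and F :: "nat \<Rightarrow> 'a set" and \<rho> :: "nat \<Rightarrow> real"
  assumes s: "0 \<le> s" and fin: "\<And>n. finite (F n)"
    and \<rho>: "\<And>n. 0 \<le> \<rho> n" "\<rho> \<longlonglongrightarrow> 0"
    and summable: "summable (\<lambda>n. card (F n) * (2 * \<rho> n) powr s)"
    and cover: "\<And>x N. x \<in> A \<Longrightarrow> \<exists>n\<ge>N. \<exists>z\<in>F n. dist x z < \<rho> n"
  shows "hausdorff_measure s A = 0"
proof -
  have bound: "hausdorff_pre s d A \<le> ennreal e" if d: "0 < d" and e: "0 < e" for d e
  proof -
    have "\<forall>\<^sub>F n in sequentially. \<rho> n < d / 2"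
      using order_tendstoD(2)[OF \<rho>(2), of "d / 2"] d by simp
    then obtain N1 where N1: "\<And>n. n \<ge> N1 \<Longrightarrow> 2 * \<rho> n \<le> d"
      unfolding eventually_sequentially by force
    obtain N2 where N2: "\<And>n. n \<ge> N2 \<Longrightarrow> norm (\<Sum>i. card (F (i + n)) * (2 * \<rho> (i + n)) powr s) < e"
      using suminf_exist_split[OF e summable] by blast
    define N where "N = max N1 N2"
    have "A \<subseteq> (\<Union>n. \<Union>z\<in>F (n + N). ball z (\<rho> (n + N)))"
    proof
      fix x assume "x \<in> A"
      then obtain n z where "n \<ge> N" "z \<in> F n" "dist x z < \<rho> n"
        using cover by blast
      then show "x \<in> (\<Union>n. \<Union>z\<in>F (n + N). ball z (\<rho> (n + N)))"
        by (intro UN_I[of "n - N"]) (auto simp: dist_commute)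
    qed
    then have "hausdorff_pre s d A \<le> ennreal (\<Sum>n. card (F (n + N)) * (2 * \<rho> (n + N)) powr s)"
      using s fin \<rho>(1) N1 summable_ignore_initial_segment[OF summable, of N]
      by (intro hausdorff_pre_le_sum_balls) (auto simp: N_def)
    also have "\<dots> \<le> ennreal e"
      using N2[of N] by (intro ennreal_leI) (simp add: N_def)
    finally show ?thesis .
  qed
  have "hausdorff_pre s d A = 0" if "0 < d" for d
  proof -
    have "hausdorff_pre s d A \<le> 0"
    proof (rule ennreal_le_epsilon)
      fix e :: real assume "0 < e"
      then show "hausdorff_pre s d A \<le> 0 + ennreal e" using bound[OF that] by simp
    qed
    then show ?thesis by simp
  qed
  then show ?thesis by (simp add: hausdorff_measure_def)
qed

section \<open>Distance on the circle and the doubling map\<close>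

lemma circ_dist_cong:
  assumes "(u - v) - (u' - v') \<in> \<int>"
  shows "circ_dist u v = circ_dist u' v'"
proof -
  have "frac (u - v) = frac (u' - v')"
    using frac_add_int_right[OF assms, of "u' - v'"] by simp
  then show ?thesis by (simp add: circ_dist_def)
qed

lemma circ_dist_eq_round: "circ_dist u v = \<bar>u - v - of_int (round (u - v))\<bar>"
proof -
  define w where "w = u - v"
  have "min (frac w) (1 - frac w) = \<bar>w - of_int (round w)\<bar>"
  proof (cases "frac w < 1/2")
    case True
    then have "round w = \<lfloor>w\<rfloor>" by (simp add: round_altdef)
    then show ?thesis using True by (simp add: frac_def)
  next
    case False
    then have "w \<notin> \<int>" by (metis frac_eq_0_iff divide_pos_pos zero_less_numeral zero_less_one)
    then have "round w = \<lfloor>w\<rfloor> + 1" using False by (simp add: round_altdef ceiling_altdef) (metis Ints_of_int)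
    then show ?thesis using False frac_lt_1[of w] by (simp add: frac_def)
  qed
  then show ?thesis by (simp add: circ_dist_def w_def)
qed

lemma circ_dist_less_iff: "circ_dist u v < d \<longleftrightarrow> (\<exists>k::int. \<bar>u - v - of_int k\<bar> < d)"
  by (metis circ_dist_eq_round order.strict_trans1 round_diff_minimal)

lemma circ_dist_eq_0_iff: "circ_dist u v = 0 \<longleftrightarrow> u - v \<in> \<int>"
proof -
  have "min (frac (u - v)) (1 - frac (u - v)) = 0 \<longleftrightarrow> frac (u - v) = 0"
    using frac_lt_1[of "u - v"] by linarith
  then show ?thesis by (simp only: circ_dist_def frac_eq_0_iff)
qed

lemma circ_dist_self [simp]: "circ_dist u u = 0"
  by (simp add: circ_dist_eq_0_iff)

lemma funpow_dbl_diff_Ints: "2 ^ n * x - (dbl ^^ n) x \<in> \<int>"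
proof (induction n)
  case (Suc n)
  have "(dbl ^^ Suc n) x = 2 * (dbl ^^ n) x - of_int \<lfloor>2 * (dbl ^^ n) x\<rfloor>"
    by (simp add: dbl_def frac_def)
  then have "2 ^ Suc n * x - (dbl ^^ Suc n) x
      = 2 * (2 ^ n * x - (dbl ^^ n) x) + of_int \<lfloor>2 * (dbl ^^ n) x\<rfloor>"
    by simp
  then show ?case using Suc.IH by (metis Ints_add Ints_mult Ints_of_int Ints_numeral)
qed simp

lemma circ_dist_funpow_dbl: "circ_dist ((dbl ^^ n) x) v = circ_dist (2 ^ n * x) v"
proof (rule circ_dist_cong)
  have "(dbl ^^ n) x - v - (2 ^ n * x - v) = - (2 ^ n * x - (dbl ^^ n) x)" by simp
  then show "(dbl ^^ n) x - v - (2 ^ n * x - v) \<in> \<int>"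
    using funpow_dbl_diff_Ints Ints_minus by metis
qed

lemma preimage_ball_eq: "preimage_ball b d n = {y. \<exists>k::int. \<bar>2 ^ n * y - b - of_int k\<bar> < d}"
  by (simp add: preimage_ball_def circ_dist_funpow_dbl circ_dist_less_iff)

lemma preimage_ball_component_subset:
  assumes d: "0 < d" "d \<le> 1/2" and x: "\<bar>2 ^ n * x - b - of_int k\<bar> < d"
  shows "connected_component_set (preimage_ball b d n) x \<subseteq> {y. \<bar>2 ^ n * y - b - of_int k\<bar> < d}"
proof
  define J where "J = connected_component_set (preimage_ball b d n) x"
  define e where "e t = (b + of_int k + t) / 2 ^ n" for t
  have e_notin: "e t \<notin> J" if t: "\<bar>t\<bar> = d" for t
  proof
    assume "e t \<in> J"
    then have "e t \<in> preimage_ball b d n"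
      unfolding J_def using connected_component_subset by blast
    then obtain k' :: int where "\<bar>of_int k + t - of_int k'\<bar> < d"
      by (auto simp: preimage_ball_eq e_def)
    then have "\<bar>t + of_int (k - k')\<bar> < d" by (simp add: algebra_simps)
    moreover have "k - k' = 0 \<or> \<bar>real_of_int (k - k')\<bar> \<ge> 1" by linarith
    ultimately show False using t d by linarith
  qed
  have x_J: "x \<in> J"
    using x by (simp add: J_def preimage_ball_eq) blast
  have J_interval: "is_interval J"
    by (simp add: J_def is_interval_connected_1)
  have pow_pos: "(0::real) < 2 ^ n" by simp
  fix y assume "y \<in> connected_component_set (preimage_ball b d n) x"
  then have y_J: "y \<in> J" by (simp add: J_def)
  show "y \<in> {y. \<bar>2 ^ n * y - b - of_int k\<bar> < d}"
  proof (rule ccontr)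
    assume "y \<notin> {y. \<bar>2 ^ n * y - b - of_int k\<bar> < d}"
    then consider "x \<le> e d" "e d \<le> y" | "y \<le> e (-d)" "e (-d) \<le> x"
      using x pow_pos by (fastforce simp: e_def field_simps abs_less_iff not_less)
    then show False
      using J_interval x_J y_J e_notin[of d] e_notin[of "-d"] d
      unfolding is_interval_1 by (metis abs_minus_cancel abs_of_pos)
  qed
qed

section \<open>Chains of close returns\<close>

(* The index k at level n stands for the point (b + k) / 2^n.  A step along a close return
   time m of b leads from (b + i) / 2^j to a point at level j + m within d / 2^(j + m) of it. *)
inductive return_chain :: "real \<Rightarrow> real \<Rightarrow> nat \<Rightarrow> int \<Rightarrow> bool" for b d where
  base: "0 \<le> k \<Longrightarrow> k \<le> 1 \<Longrightarrow> return_chain b d 0 k"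
| step: "return_chain b d j i \<Longrightarrow> 1 \<le> m \<Longrightarrow> circ_dist (2 ^ m * b) b < d \<Longrightarrow>
    return_chain b d (j + m) (2 ^ m * i + round (2 ^ m * b - b))"

lemma earlier_close_time_if_not_good:
  assumes d: "0 < d'" "d' < d" "d \<le> 1/2"
    and expand: "\<And>m. 1 \<le> m \<Longrightarrow> circ_dist (2 ^ m * b) b < d \<Longrightarrow>
      d' + circ_dist (2 ^ m * b) b \<le> 2 ^ m * d'"
    and n: "0 < n" and not_good: "\<not> good_time b d d' x n"
    and k: "\<bar>2 ^ n * x - b - of_int k\<bar> < d'"
  obtains j m i where "n = j + m" "1 \<le> m" "circ_dist (2 ^ m * b) b < d"
    "\<bar>2 ^ j * x - b - of_int i\<bar> < d'" "k = 2 ^ m * i + round (2 ^ m * b - b)"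
proof -
  have "circ_dist ((dbl ^^ n) x) b < d'"
    using k by (auto simp: circ_dist_funpow_dbl circ_dist_less_iff)
  then obtain j y where j: "j < n" and y: "y \<in> connected_component_set (preimage_ball b d n) x"
    and "circ_dist ((dbl ^^ j) y) b = 0"
    using not_good n unfolding good_time_def by auto
  then obtain i :: int where i: "2 ^ j * y - b = of_int i"
    by (auto simp: circ_dist_funpow_dbl circ_dist_eq_0_iff elim: Ints_cases)
  define m where "m = n - j"
  have n: "n = j + m" and m: "1 \<le> m" using j by (auto simp: m_def)
  define c where "c = k - 2 ^ m * i"
  have "2 ^ n * y = 2 ^ m * (2 ^ j * y)" by (simp add: n power_add)
  also have "\<dots> = 2 ^ m * (b + of_int i)" using i by (simp add: algebra_simps)
  finally have "2 ^ n * y = 2 ^ m * (b + of_int i)" .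
  moreover have "\<bar>2 ^ n * y - b - of_int k\<bar> < d"
    using preimage_ball_component_subset[of d n x b k] y k d by auto
  moreover have "2 ^ n * y - b - of_int k = 2 ^ m * b - b - of_int c"
    using \<open>2 ^ n * y = 2 ^ m * (b + of_int i)\<close> by (simp add: c_def algebra_simps)
  ultimately have return: "\<bar>2 ^ m * b - b - of_int c\<bar> < d" by simp
  then have c: "round (2 ^ m * b - b) = c"
    using d by (intro round_unique') auto
  then have dist: "circ_dist (2 ^ m * b) b = \<bar>2 ^ m * b - b - of_int c\<bar>"
    by (simp add: circ_dist_eq_round)
  have "2 ^ m * (2 ^ j * x - b - of_int i) = (2 ^ n * x - b - of_int k) - (2 ^ m * b - b - of_int c)"
    by (simp add: n power_add c_def algebra_simps)
  then have "2 ^ m * \<bar>2 ^ j * x - b - of_int i\<bar> < d' + \<bar>2 ^ m * b - b - of_int c\<bar>"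
    using k by (simp add: abs_mult[symmetric])
  also have "\<dots> \<le> 2 ^ m * d'"
    using expand[OF m] return dist by simp
  finally have "\<bar>2 ^ j * x - b - of_int i\<bar> < d'" by simp
  moreover have "circ_dist (2 ^ m * b) b < d" using return dist by simp
  moreover have "k = 2 ^ m * i + round (2 ^ m * b - b)" using c by (simp add: c_def)
  ultimately show ?thesis using that n m by blast
qed

lemma return_chain_if_no_good_time:
  assumes d: "0 < d'" "d' < d" "d \<le> 1/2" and b: "\<bar>b\<bar> \<le> 1/2"
    and expand: "\<And>m. 1 \<le> m \<Longrightarrow> circ_dist (2 ^ m * b) b < d \<Longrightarrow>
      d' + circ_dist (2 ^ m * b) b \<le> 2 ^ m * d'"
    and x: "0 \<le> x" "x < 1" and no_good: "\<And>n. \<not> good_time b d d' x n"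
  shows "\<bar>2 ^ n * x - b - of_int k\<bar> < d' \<Longrightarrow> return_chain b d n k"
proof (induction n arbitrary: k rule: less_induct)
  case (less n)
  show ?case
  proof (cases "n = 0")
    case True
    then have "real_of_int k > -1" "real_of_int k < 2"
      using less.prems x b d by (auto simp: abs_less_iff)
    then show ?thesis using True by (simp add: return_chain.base)
  next
    case False
    then obtain j m i where n: "n = j + m" and m: "1 \<le> m" "circ_dist (2 ^ m * b) b < d"
      and i: "\<bar>2 ^ j * x - b - of_int i\<bar> < d'" and k: "k = 2 ^ m * i + round (2 ^ m * b - b)"
      using earlier_close_time_if_not_good[OF d expand _ no_good less.prems] by blast
    have "return_chain b d j i"
      using less.IH[OF _ i] n m(1) by simp
    then show ?thesis
      unfolding n k using m by (rule return_chain.step)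
  qed
qed

lemma bad_set_near_return_chain:
  assumes d: "0 < d'" "d' < d" "d \<le> 1/2" and b: "\<bar>b\<bar> \<le> 1/2"
    and expand: "\<And>m. 1 \<le> m \<Longrightarrow> circ_dist (2 ^ m * b) b < d \<Longrightarrow>
      d' + circ_dist (2 ^ m * b) b \<le> 2 ^ m * d'"
    and x: "x \<in> bad_set b d d'"
  shows "\<exists>n\<ge>N. \<exists>k. return_chain b d n k \<and> dist x ((b + of_int k) / 2 ^ n) < d' / 2 ^ n"
proof -
  have "frac b \<in> omega_limit x" using x by (simp add: bad_set_def)
  then obtain n where n: "n \<ge> N" and "circ_dist ((dbl ^^ n) x) (frac b) < d'"
    using d unfolding omega_limit_def by blast
  moreover have "circ_dist (2 ^ n * x) (frac b) = circ_dist (2 ^ n * x) b"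
    by (rule circ_dist_cong) (simp add: frac_def)
  ultimately obtain k :: int where k: "\<bar>2 ^ n * x - b - of_int k\<bar> < d'"
    by (auto simp: circ_dist_funpow_dbl circ_dist_less_iff)
  have "dist x ((b + of_int k) / 2 ^ n) = \<bar>2 ^ n * x - b - of_int k\<bar> / 2 ^ n"
    by (simp add: dist_real_def field_simps flip: abs_div_pos)
  also have "\<dots> < d' / 2 ^ n" using k by (simp add: divide_strict_right_mono)
  finally show ?thesis
    using return_chain_if_no_good_time[OF d b expand _ _ _ k] x n by (auto simp: bad_set_def)
qed

section \<open>Counting chains\<close>

lemma return_chain_subset:
  assumes "n \<ge> 1"
  shows "{k. return_chain b d n k} \<subseteq>
    (\<Union>m \<in> {m. 1 \<le> m \<and> m \<le> n \<and> circ_dist (2 ^ m * b) b < d}.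
      (\<lambda>i. 2 ^ m * i + round (2 ^ m * b - b)) ` {i. return_chain b d (n - m) i})"
proof
  fix k assume "k \<in> {k. return_chain b d n k}"
  then have "return_chain b d n k" by simp
  then show "k \<in> (\<Union>m \<in> {m. 1 \<le> m \<and> m \<le> n \<and> circ_dist (2 ^ m * b) b < d}.
      (\<lambda>i. 2 ^ m * i + round (2 ^ m * b - b)) ` {i. return_chain b d (n - m) i})"
    using assms by (cases rule: return_chain.cases) force+
qed

lemma finite_return_chain: "finite {k. return_chain b d n k}"
proof (induction n rule: less_induct)
  case (less n)
  show ?case
  proof (cases "n = 0")
    case True
    then have "{k. return_chain b d n k} \<subseteq> {0..1}" by (auto elim: return_chain.cases)
    then show ?thesis using finite_subset by blast
  next
    case False
    then show ?thesis
      using return_chain_subset[of n b d] less.IH by (auto intro: finite_subset)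
  qed
qed

lemma card_return_chain_le_sum:
  assumes "n \<noteq> 0" and sparse: "\<And>m. 1 \<le> m \<Longrightarrow> circ_dist (2 ^ m * b) b < d \<Longrightarrow> M \<le> m"
  shows "card {k. return_chain b d n k} \<le> (\<Sum>m = M..n. card {k. return_chain b d (n - m) k})"
proof -
  define G where "G n = {k. return_chain b d n k}" for n
  have "{m. 1 \<le> m \<and> m \<le> n \<and> circ_dist (2 ^ m * b) b < d} \<subseteq> {M..n}"
    using sparse by auto
  then have "G n \<subseteq> (\<Union>m \<in> {M..n}. (\<lambda>i. 2 ^ m * i + round (2 ^ m * b - b)) ` G (n - m))"
    unfolding G_def using assms(1) by (intro order_trans[OF return_chain_subset UN_mono]) auto
  then have "card (G n) \<le> card (\<Union>m \<in> {M..n}. (\<lambda>i. 2 ^ m * i + round (2 ^ m * b - b)) ` G (n - m))"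
    by (intro card_mono) (auto simp: G_def finite_return_chain)
  also have "\<dots> \<le> (\<Sum>m = M..n. card ((\<lambda>i. 2 ^ m * i + round (2 ^ m * b - b)) ` G (n - m)))"
    by (rule card_UN_le) simp
  also have "\<dots> \<le> (\<Sum>m = M..n. card (G (n - m)))"
    by (intro sum_mono card_image_le) (simp add: G_def finite_return_chain)
  finally show ?thesis by (simp add: G_def)
qed

lemma sum_power_diff_le:
  fixes \<mu> :: real
  assumes \<mu>: "1 < \<mu>" "(1 / \<mu>) ^ M \<le> 1 - 1 / \<mu>"
  shows "(\<Sum>m = M..n. \<mu> ^ (n - m)) \<le> \<mu> ^ n"
proof -
  have "(\<Sum>m = M..n. \<mu> ^ (n - m)) = \<mu> ^ n * (\<Sum>m = M..n. (1 / \<mu>) ^ m)"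
    using \<mu> by (simp add: sum_distrib_left power_diff power_one_over field_simps)
  also have "\<dots> \<le> \<mu> ^ n * ((1 / \<mu>) ^ M / (1 - 1 / \<mu>))"
    using \<mu> by (intro mult_left_mono) (auto simp: sum_gp divide_right_mono)
  also have "\<dots> \<le> \<mu> ^ n"
  proof -
    have "(1 / \<mu>) ^ M / (1 - 1 / \<mu>) \<le> 1" using \<mu> by (simp add: divide_le_eq_1)
    moreover have "0 \<le> \<mu> ^ n" using \<mu> by simp
    ultimately show ?thesis by (rule mult_left_le)
  qed
  finally show ?thesis .
qed

lemma card_return_chain_sparse:
  fixes \<mu> :: real
  assumes \<mu>: "1 < \<mu>" "(1 / \<mu>) ^ M \<le> 1 - 1 / \<mu>"
    and sparse: "\<And>m. 1 \<le> m \<Longrightarrow> circ_dist (2 ^ m * b) b < d \<Longrightarrow> M \<le> m"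
  shows "card {k. return_chain b d n k} \<le> 2 * \<mu> ^ n"
proof (induction n rule: less_induct)
  case (less n)
  show ?case
  proof (cases "n = 0")
    case True
    then have "{k. return_chain b d n k} \<subseteq> {0..1}" by (auto elim: return_chain.cases)
    then have "card {k. return_chain b d n k} \<le> 2" using card_mono[of "{0..1::int}"] by fastforce
    then show ?thesis using True by simp
  next
    case False
    have "M \<noteq> 0" using \<mu> by (intro notI) simp
    have "card {k. return_chain b d n k} \<le> (\<Sum>m = M..n. card {k. return_chain b d (n - m) k})"
      using False sparse by (rule card_return_chain_le_sum)
    then have "card {k. return_chain b d n k} \<le> (\<Sum>m = M..n. real (card {k. return_chain b d (n - m) k}))"
      by (simp flip: of_nat_sum)
    also have "\<dots> \<le> (\<Sum>m = M..n. 2 * \<mu> ^ (n - m))"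
      using \<open>M \<noteq> 0\<close> by (intro sum_mono) (simp add: less.IH)
    also have "\<dots> \<le> 2 * \<mu> ^ n"
      using sum_power_diff_le[OF \<mu>, of n] by (simp flip: sum_distrib_left)
    finally show ?thesis .
  qed
qed

lemma return_chain_exact:
  assumes exact: "\<And>m. 1 \<le> m \<Longrightarrow> circ_dist (2 ^ m * b) b < d \<Longrightarrow> circ_dist (2 ^ m * b) b = 0"
  shows "return_chain b d n k \<Longrightarrow> \<exists>i\<in>{0, 1}. b + of_int k = 2 ^ n * (b + of_int i)"
proof (induction rule: return_chain.induct)
  case (base k)
  then show ?case by auto
next
  case (step j i m)
  then obtain i0 where i0: "i0 \<in> {0, 1}" "b + of_int i = 2 ^ j * (b + of_int i0)" by blast
  have "2 ^ m * b - b \<in> \<int>"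
    using exact[OF step.hyps(2,3)] by (simp add: circ_dist_eq_0_iff)
  then have "of_int (round (2 ^ m * b - b)) = 2 ^ m * b - b" by (auto elim: Ints_cases)
  then have "b + of_int (2 ^ m * i + round (2 ^ m * b - b)) = 2 ^ m * (b + of_int i)"
    by (simp add: algebra_simps)
  also have "\<dots> = 2 ^ (j + m) * (b + of_int i0)" by (simp add: i0 power_add)
  finally show ?case using i0(1) by blast
qed

lemma card_return_chain_exact:
  assumes "\<And>m. 1 \<le> m \<Longrightarrow> circ_dist (2 ^ m * b) b < d \<Longrightarrow> circ_dist (2 ^ m * b) b = 0"
  shows "card {k. return_chain b d n k} \<le> 2"
proof -
  have "{k. return_chain b d n k} \<subseteq> (\<lambda>i. round (2 ^ n * (b + of_int i) - b)) ` {0, 1}"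
  proof
    fix k assume "k \<in> {k. return_chain b d n k}"
    then obtain i where i: "i \<in> {0, 1}" "b + of_int k = 2 ^ n * (b + of_int i)"
      using return_chain_exact[OF assms] by blast
    then have "k = round (2 ^ n * (b + of_int i) - b)"
      by (simp flip: i(2))
    then show "k \<in> (\<lambda>i. round (2 ^ n * (b + of_int i) - b)) ` {0, 1}"
      using i(1) by blast
  qed
  then have "card {k. return_chain b d n k} \<le> card ((\<lambda>i. round (2 ^ n * (b + of_int i) - b)) ` {0, 1::int})"
    by (intro card_mono) auto
  also have "\<dots> \<le> card {0, 1::int}" by (rule card_image_le) simp
  also have "\<dots> = 2" by simp
  finally show ?thesis .
qed

lemma circ_dist_pow2_mult_mod:
  assumes "circ_dist (2 ^ P * b) b = 0"
  shows "circ_dist (2 ^ m * b) b = circ_dist (2 ^ (m mod P) * b) b"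
proof -
  have "2 ^ (q * P) * b - b \<in> \<int>" for q
  proof (induction q)
    case (Suc q)
    have "2 ^ P * b - b \<in> \<int>" using assms by (simp add: circ_dist_eq_0_iff)
    then have "2 ^ P * (2 ^ (q * P) * b - b) + (2 ^ P * b - b) \<in> \<int>"
      using Suc.IH by (intro Ints_add Ints_mult) auto
    moreover have "2 ^ (Suc q * P) * b - b = 2 ^ P * (2 ^ (q * P) * b - b) + (2 ^ P * b - b)"
      by (simp add: power_add algebra_simps)
    ultimately show ?case by (simp only:)
  qed simp
  moreover have "(2::real) ^ m = 2 ^ (m mod P) * 2 ^ (m div P * P)"
    by (simp flip: power_add)
  then have "2 ^ m * b - b - (2 ^ (m mod P) * b - b) = 2 ^ (m mod P) * (2 ^ (m div P * P) * b - b)"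
    by (simp add: algebra_simps)
  ultimately show ?thesis
    by (intro circ_dist_cong) (auto intro: Ints_mult)
qed

lemma card_return_chain_le:
  fixes \<mu> :: real
  assumes \<mu>: "1 < \<mu>" "(1 / \<mu>) ^ M \<le> 1 - 1 / \<mu>"
    and exact_below: "\<And>m. 1 \<le> m \<Longrightarrow> m < M \<Longrightarrow> circ_dist (2 ^ m * b) b < d \<Longrightarrow>
      circ_dist (2 ^ m * b) b = 0"
  shows "card {k. return_chain b d n k} \<le> 2 * \<mu> ^ n"
proof (cases "\<exists>P. 1 \<le> P \<and> P < M \<and> circ_dist (2 ^ P * b) b = 0")
  case True
  then obtain P where P: "1 \<le> P" "P < M" "circ_dist (2 ^ P * b) b = 0" by blast
  have "circ_dist (2 ^ m * b) b = 0" if m: "1 \<le> m" "circ_dist (2 ^ m * b) b < d" for m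
  proof (cases "m mod P = 0")
    case True
    then show ?thesis using circ_dist_pow2_mult_mod[OF P(3), of m] by simp
  next
    case False
    have "m mod P < M" using P by (meson mod_less_divisor less_le_trans less_trans zero_less_one)
    then show ?thesis
      using circ_dist_pow2_mult_mod[OF P(3), of m] exact_below[of "m mod P"] False m by simp
  qed
  then have "card {k. return_chain b d n k} \<le> 2" by (rule card_return_chain_exact)
  moreover have "1 \<le> \<mu> ^ n" using \<mu> by simp
  ultimately show ?thesis by linarith
next
  case False
  have "M \<le> m" if m: "1 \<le> m" "circ_dist (2 ^ m * b) b < d" for m
  proof (rule ccontr)
    assume "\<not> M \<le> m"
    then show False using False exact_below m by force
  qed
  then show ?thesis by (rule card_return_chain_sparse[OF \<mu>])
qed

lemma exists_radius_exact_returns: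
  "\<exists>\<delta>>0. \<delta> \<le> 1/4 \<and>
    (\<forall>m. 1 \<le> m \<longrightarrow> m < M \<longrightarrow> circ_dist (2 ^ m * b) b < \<delta> \<longrightarrow> circ_dist (2 ^ m * b) b = 0)"
proof -
  define D where "D = {circ_dist (2 ^ m * b) b | m. m < M \<and> circ_dist (2 ^ m * b) b > 0}"
  have "finite D" unfolding D_def by simp
  define \<delta> where "\<delta> = Min (insert (1/4) D)"
  have "\<delta> > 0"
    using \<open>finite D\<close> unfolding \<delta>_def by (subst Min_gr_iff) (auto simp: D_def)
  moreover have "\<delta> \<le> 1/4"
    using \<open>finite D\<close> unfolding \<delta>_def by (intro Min_le) auto
  moreover have "circ_dist (2 ^ m * b) b = 0" if "m < M" "circ_dist (2 ^ m * b) b < \<delta>" for m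
  proof (rule ccontr)
    assume "circ_dist (2 ^ m * b) b \<noteq> 0"
    moreover have "circ_dist (2 ^ m * b) b \<ge> 0" by (simp add: circ_dist_eq_round)
    ultimately have "circ_dist (2 ^ m * b) b \<in> D"
      using that(1) by (auto simp: D_def)
    then have "\<delta> \<le> circ_dist (2 ^ m * b) b" using \<open>finite D\<close> by (simp add: \<delta>_def)
    then show False using that(2) by simp
  qed
  ultimately show ?thesis by blast
qed

lemma close_returns_expand:
  assumes "0 < d'" "d + d' \<le> 2 ^ M * d'"
    and exact_below: "\<And>m. 1 \<le> m \<Longrightarrow> m < M \<Longrightarrow> circ_dist (2 ^ m * b) b < d \<Longrightarrow>
      circ_dist (2 ^ m * b) b = 0"
    and m: "1 \<le> m" "circ_dist (2 ^ m * b) b < d"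
  shows "d' + circ_dist (2 ^ m * b) b \<le> 2 ^ m * d'"
proof (cases "m < M")
  case True
  then show ?thesis using exact_below[OF m(1) True m(2)] assms(1) by simp
next
  case False
  have "d' + circ_dist (2 ^ m * b) b \<le> 2 ^ M * d'" using assms(2) m(2) by linarith
  also have "\<dots> \<le> 2 ^ m * d'" using False assms(1) by (simp add: power_increasing)
  finally show ?thesis .
qed

lemma hausdorff_measure_bad_set_eq_0:
  fixes \<mu> :: real
  assumes d: "0 < d'" "d' < d" "d \<le> 1/2" and b: "\<bar>b\<bar> \<le> 1/2"
    and expand: "\<And>m. 1 \<le> m \<Longrightarrow> circ_dist (2 ^ m * b) b < d \<Longrightarrow>
      d' + circ_dist (2 ^ m * b) b \<le> 2 ^ m * d'"
    and s: "0 \<le> s" and \<mu>: "0 < \<mu>" "\<mu> < 2 powr s"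
    and card: "\<And>n. card {k. return_chain b d n k} \<le> K * \<mu> ^ n"
  shows "hausdorff_measure s (bad_set b d d') = 0"
proof (rule hausdorff_measure_limsup_balls_eq_0)
  define F where "F n = (\<lambda>k. (b + of_int k) / 2 ^ n) ` {k. return_chain b d n k}" for n
  show "finite (F n)" for n
    by (simp add: F_def finite_return_chain)
  show "(\<lambda>n. d' / 2 ^ n) \<longlonglongrightarrow> 0"
    by (rule LIMSEQ_divide_realpow_zero) simp
  have "card (F n) * (2 * (d' / 2 ^ n)) powr s \<le> K * (2 * d') powr s * (\<mu> / 2 powr s) ^ n" for n
  proof -
    have "card (F n) \<le> card {k. return_chain b d n k}"
      unfolding F_def by (rule card_image_le[OF finite_return_chain])
    then have card_le: "card (F n) \<le> K * \<mu> ^ n"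
      using card[of n] of_nat_mono by (blast intro: order_trans)
    have "((2::real) ^ n) powr s = (2 powr s) ^ n"
      by (simp add: powr_realpow[symmetric] powr_powr powr_power mult.commute)
    then have powr_eq: "(2 * (d' / 2 ^ n)) powr s = (2 * d') powr s / (2 powr s) ^ n"
      by (simp add: powr_divide)
    have "card (F n) * (2 * (d' / 2 ^ n)) powr s \<le> K * \<mu> ^ n * ((2 * d') powr s / (2 powr s) ^ n)"
      unfolding powr_eq by (intro mult_right_mono card_le) simp
    then show ?thesis by (simp add: power_divide mult_ac)
  qed
  then show "summable (\<lambda>n. card (F n) * (2 * (d' / 2 ^ n)) powr s)"
    using \<mu> by (intro summable_comparison_test'[OF summable_mult[OF summable_geometric]]) auto
  show "\<And>x N. x \<in> bad_set b d d' \<Longrightarrow> \<exists>n\<ge>N. \<exists>z\<in>F n. dist x z < d' / 2 ^ n"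
    using bad_set_near_return_chain[OF d b expand] unfolding F_def by blast
qed (use s d in auto)

lemma exists_radii_bad_set_null:
  fixes b C s :: real
  assumes b: "\<bar>b\<bar> \<le> 1/2" and C: "1 < C" and s: "0 < s"
  shows "\<exists>\<delta> \<delta>'. 0 < \<delta>' \<and> C * \<delta>' < \<delta> \<and> \<delta> \<le> 1/4 \<and> hausdorff_measure s (bad_set b \<delta> \<delta>') = 0"
proof -
  define \<mu> where "\<mu> = 2 powr (s / 2)"
  have \<mu>: "1 < \<mu>" "\<mu> < 2 powr s" using s by (simp_all add: \<mu>_def)
  have "\<forall>\<^sub>F M in sequentially. (1 / \<mu>) ^ M < 1 - 1 / \<mu>"
    using \<mu> by (intro order_tendstoD(2)[OF LIMSEQ_power_zero]) auto
  moreover have "\<forall>\<^sub>F M in sequentially. (1 / 2) ^ M < 1 / (1 + 2 * C)"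
    using C by (intro order_tendstoD(2)[OF LIMSEQ_power_zero]) auto
  ultimately obtain M where "(1 / \<mu>) ^ M < 1 - 1 / \<mu>" "(1 / 2) ^ M < 1 / (1 + 2 * C)"
    by (metis (no_types, lifting) eventually_conj eventually_sequentially order.refl)
  then have M: "(1 / \<mu>) ^ M \<le> 1 - 1 / \<mu>" "1 + 2 * C \<le> 2 ^ M"
    using C by (simp_all add: power_one_over field_simps)
  obtain \<delta> where \<delta>: "0 < \<delta>" "\<delta> \<le> 1/4"
    and exact_below: "\<And>m. 1 \<le> m \<Longrightarrow> m < M \<Longrightarrow> circ_dist (2 ^ m * b) b < \<delta> \<Longrightarrow>
      circ_dist (2 ^ m * b) b = 0"
    using exists_radius_exact_returns by blast
  define \<delta>' where "\<delta>' = \<delta> / (2 * C)"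
  have \<delta>': "0 < \<delta>'" "C * \<delta>' < \<delta>" using \<delta> C by (auto simp: \<delta>'_def)
  have "\<delta>' < \<delta>" using \<delta> C by (simp add: \<delta>'_def field_simps)
  have "\<delta> + \<delta>' = (1 + 2 * C) * \<delta>'" using C by (simp add: \<delta>'_def field_simps)
  also have "\<dots> \<le> 2 ^ M * \<delta>'" using M(2) \<delta>'(1) by (intro mult_right_mono) auto
  finally have "hausdorff_measure s (bad_set b \<delta> \<delta>') = 0"
    using \<delta> \<delta>' \<open>\<delta>' < \<delta>\<close> C b s \<mu> exact_below
    by (intro hausdorff_measure_bad_set_eq_0[where K = 2 and \<mu> = \<mu>] card_return_chain_le[OF \<mu>(1) M(1)]
        close_returns_expand) auto
  then show ?thesis using \<delta> \<delta>' by blast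
qed

lemma hausdorff_dim_le:
  assumes "0 < s" "hausdorff_measure s A = 0"
  shows "hausdorff_dim A \<le> ereal s"
  unfolding hausdorff_dim_def using assms by (intro Inf_lower) blast

theorem proposition6p5:
  fixes c \<epsilon> C :: real
  assumes "0 \<le> c" and "c < 1" and "\<epsilon> > 0" and "C > 1"
  shows "\<exists>\<delta> \<delta>'. 0 < \<delta>' \<and> \<delta>' < C * \<delta>' \<and> C * \<delta>' < \<delta> \<and> \<delta> < 1/2 \<and>
           hausdorff_dim (bad_set (1/2 - c) \<delta> \<delta>') < ereal \<epsilon>"
proof -
  have "\<bar>1/2 - c\<bar> \<le> 1/2" using assms by linarith
  then obtain \<delta> \<delta>' where \<delta>: "0 < \<delta>'" "C * \<delta>' < \<delta>" "\<delta> \<le> 1/4"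
    and null: "hausdorff_measure (\<epsilon> / 2) (bad_set (1/2 - c) \<delta> \<delta>') = 0"
    using exists_radii_bad_set_null[of "1/2 - c" C "\<epsilon> / 2"] assms by auto
  have "hausdorff_dim (bad_set (1/2 - c) \<delta> \<delta>') \<le> ereal (\<epsilon> / 2)"
    using null assms by (intro hausdorff_dim_le) auto
  also have "\<dots> < ereal \<epsilon>" using assms by simp
  finally show ?thesis using \<delta> assms by (intro exI[of _ \<delta>] exI[of _ \<delta>']) auto
qed

end
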